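(* Assume (K1). Let $\alpha,\beta\in\mathbb Z_+^d$ with $|\alpha|=|\beta|=3$. Then (i) $\int_{\mathbb R^d}K^{(\alpha)}(u)K^{(\beta)}(u)\,du=\int_{\mathbb R^d}[K^{(\rho_q)}(u)]^2du$ if $\alpha+\beta\in\{2\gamma:\gamma\in\Pi(\rho_q)\}$ for some $q\in\{1,2,3\}$ (with $q=3$ only if $d\ge3$), and $=0$ otherwise; (ii) $a_K\ge1$, and if $d\ge3$ then $b_K\le1$.
   Context: $d\ge2$. For a multi-index $\gamma=(\gamma_1,\dots,\gamma_d)\in\mathbb Z_+^d$, $|\gamma|=\sum\gamma_i$ and $K^{(\gamma)}=\partial^{|\gamma|}K/\partial x_1^{\gamma_1}\cdots\partial x_d^{\gamma_d}$. $\rho_1=(3,0,\dots,0)$, $\rho_2=(2,1,0,\dots,0)$, and for $d\ge3$ $\rho_3=(1,1,1,0,\dots,0)$; $\Pi(\rho_q)$ is the set of all vectors obtained by permuting the entries of $\rho_q$. $a_K=\int[K^{(\rho_1)}]^2/\int[K^{(\rho_2)}]^2$ and (for $d\ge3$) $b_K=\int[K^{(\rho_3)}]^2/\int[K^{(\rho_2)}]^2$. (K1): $K$ is a spherically symmetric probability density on $\mathbb R^d$ supported on the closed unit ball, with continuous partial derivatives up to order 4. *)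

theory Defs
  imports "HOL-Analysis.Analysis"
begin

text \<open>Points of R^d are vectors real^'n, with d = CARD('n). The index type carries a
linear order so that coordinates can be numbered 1..d (coordinate k is the k-th
smallest element of 'n, counting from 0 in Isabelle).\<close>

definition coord :: "nat \<Rightarrow> 'n::{finite,linorder}" where
  "coord k = sorted_list_of_set (UNIV :: 'n set) ! k"

definition partial :: "'n::finite \<Rightarrow> (real^'n \<Rightarrow> real) \<Rightarrow> real^'n \<Rightarrow> real" where
  "partial i f x = deriv (\<lambda>t. f (x + t *\<^sub>R axis i 1)) 0"

fun pdl :: "'n::finite list \<Rightarrow> (real^'n \<Rightarrow> real) \<Rightarrow> real^'n \<Rightarrow> real" where
  "pdl [] f = f"
| "pdl (i # is) f = partial i (pdl is f)"

definition cont_partials_upto :: "nat \<Rightarrow> (real^'n::finite \<Rightarrow> real) \<Rightarrow> bool" where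
  "cont_partials_upto m f \<longleftrightarrow>
     (\<forall>is. length is \<le> m \<longrightarrow> continuous_on UNIV (pdl is f)) \<and>
     (\<forall>is i x. length is < m \<longrightarrow>
        ((\<lambda>t. pdl is f (x + t *\<^sub>R axis i 1)) has_real_derivative pdl (i # is) f x) (at 0))"

definition mi_order :: "('n::finite \<Rightarrow> nat) \<Rightarrow> nat" where
  "mi_order \<gamma> = (\<Sum>i\<in>UNIV. \<gamma> i)"

definition mderiv :: "('n::finite \<Rightarrow> nat) \<Rightarrow> (real^'n \<Rightarrow> real) \<Rightarrow> real^'n \<Rightarrow> real" where
  "mderiv \<gamma> f = pdl (SOME is. \<forall>i. count_list is i = \<gamma> i) f"

definition rho :: "nat \<Rightarrow> 'n::{finite,linorder} \<Rightarrow> nat" where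
  "rho q = (if q = 1 then (\<lambda>j. if j = coord 0 then 3 else 0)
            else if q = 2 then (\<lambda>j. if j = coord 0 then 2 else if j = coord 1 then 1 else 0)
            else (\<lambda>j. if j = coord 0 \<or> j = coord 1 \<or> j = coord 2 then 1 else 0))"

definition Perms :: "('n::finite \<Rightarrow> nat) \<Rightarrow> ('n \<Rightarrow> nat) set" where
  "Perms \<gamma> = {\<gamma> \<circ> \<sigma> | \<sigma>. \<sigma> permutes (UNIV :: 'n set)}"

definition sq_int :: "('n::finite \<Rightarrow> nat) \<Rightarrow> (real^'n \<Rightarrow> real) \<Rightarrow> real" where
  "sq_int \<gamma> K = (LINT u|lborel. (mderiv \<gamma> K u)\<^sup>2)"

definition a_K :: "(real^'n::{finite,linorder} \<Rightarrow> real) \<Rightarrow> real" where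
  "a_K K = sq_int (rho 1) K / sq_int (rho 2) K"

definition b_K :: "(real^'n::{finite,linorder} \<Rightarrow> real) \<Rightarrow> real" where
  "b_K K = sq_int (rho 3) K / sq_int (rho 2) K"

definition K1 :: "(real^'n::finite \<Rightarrow> real) \<Rightarrow> bool" where
  "K1 K \<longleftrightarrow>
     (\<forall>x y. norm x = norm y \<longrightarrow> K x = K y) \<and>
     (\<forall>x. 0 \<le> K x) \<and> integrable lborel K \<and> (LINT u|lborel. K u) = 1 \<and>
     (\<forall>x. 1 < norm x \<longrightarrow> K x = 0) \<and>
     cont_partials_upto 4 K"

end

(* Integration by parts along a coordinate direction moves one derivative from K^(alpha) to
   K^(beta) at the cost of a sign, since all derivatives of K vanish outside the unit ball.
   Moving one derivative out of a coordinate where alpha exceeds gamma = (alpha + beta)/2 and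
   one back into a coordinate where it falls short keeps the sign, so by induction
   int K^(alpha) K^(beta) = int [K^(gamma)]^2.  If alpha + beta has an odd entry, reflecting
   that coordinate preserves K (spherical symmetry) but reverses the sign of the integrand, so
   the integral vanishes.  Coordinate permutations also preserve K, hence int [K^(gamma)]^2
   only depends on the entries of gamma, and every gamma of order 3 is a permutation of some
   rho_q.  Finally rho_1 + (1,2,0,...) = 2 rho_2 and (2,0,1,...) + (0,2,1,...) = 2 rho_3, so
   2ab <= a^2 + b^2 gives int [K^(rho_2)]^2 <= int [K^(rho_1)]^2 and
   int [K^(rho_3)]^2 <= int [K^(rho_2)]^2.  *)

theory Submission
  imports Defs
begin

section \<open>Symmetry of iterated partial derivatives\<close>

lemma has_real_derivative_along_line:
  fixes g :: "'a::real_normed_vector \<Rightarrow> real"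
  assumes "\<And>x. ((\<lambda>t. g (x + t *\<^sub>R v)) has_real_derivative g' x) (at 0)"
  shows "((\<lambda>t. g (y + t *\<^sub>R v)) has_real_derivative g' (y + s *\<^sub>R v)) (at s)"
proof -
  have "((\<lambda>t. g ((y + s *\<^sub>R v) + t *\<^sub>R v)) has_real_derivative g' (y + s *\<^sub>R v)) (at 0)"
    by (rule assms)
  then have "((\<lambda>t. g (y + (t + s) *\<^sub>R v)) has_real_derivative g' (y + s *\<^sub>R v)) (at 0)"
    by (simp add: algebra_simps scaleR_add_left)
  then show ?thesis
    using DERIV_shift[of "\<lambda>t. g (y + t *\<^sub>R v)" "g' (y + s *\<^sub>R v)" 0 s] by simp
qed

lemma mean_value_from_origin:
  fixes F :: "real \<Rightarrow> real"
  assumes "\<And>s. (F has_real_derivative F' s) (at s)" and "h \<noteq> 0"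
  obtains z where "\<bar>z\<bar> \<le> \<bar>h\<bar>" and "F h - F 0 = h * F' z"
proof (cases "h > 0")
  case True
  with MVT2[of 0 h F F'] assms(1) obtain z where "0 < z" "z < h" "F h - F 0 = (h - 0) * F' z"
    by blast
  then show ?thesis using that[of z] by auto
next
  case False
  with assms(2) MVT2[of h 0 F F'] assms(1) obtain z where "h < z" "z < 0" "F 0 - F h = (0 - h) * F' z"
    by auto
  then show ?thesis using that[of z] by (auto simp: algebra_simps)
qed

lemma second_difference_mean_value:
  fixes f :: "'a::real_normed_vector \<Rightarrow> real"
  assumes fu: "\<And>x. ((\<lambda>t. f (x + t *\<^sub>R u)) has_real_derivative fu x) (at 0)"
    and fuv: "\<And>x. ((\<lambda>t. fu (x + t *\<^sub>R v)) has_real_derivative fuv x) (at 0)"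
    and h: "h \<noteq> 0"
  obtains p where "norm (p - x) \<le> \<bar>h\<bar> * (norm u + norm v)"
    and "f (x + h *\<^sub>R u + h *\<^sub>R v) - f (x + h *\<^sub>R u) - f (x + h *\<^sub>R v) + f x = h * h * fuv p"
proof -
  define F where "F s = f (x + h *\<^sub>R v + s *\<^sub>R u) - f (x + s *\<^sub>R u)" for s
  have "(F has_real_derivative (fu (x + h *\<^sub>R v + s *\<^sub>R u) - fu (x + s *\<^sub>R u))) (at s)" for s
    unfolding F_def by (intro derivative_intros has_real_derivative_along_line[of f u fu] fu)
  from mean_value_from_origin[OF this h] obtain s where s: "\<bar>s\<bar> \<le> \<bar>h\<bar>"
    "F h - F 0 = h * (fu (x + h *\<^sub>R v + s *\<^sub>R u) - fu (x + s *\<^sub>R u))" by blast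
  define G where "G t = fu (x + s *\<^sub>R u + t *\<^sub>R v)" for t
  have "(G has_real_derivative fuv (x + s *\<^sub>R u + t *\<^sub>R v)) (at t)" for t
    unfolding G_def by (rule has_real_derivative_along_line[of fu v fuv]) (rule fuv)
  from mean_value_from_origin[OF this h] obtain t where t: "\<bar>t\<bar> \<le> \<bar>h\<bar>"
    "G h - G 0 = h * fuv (x + s *\<^sub>R u + t *\<^sub>R v)" by blast
  have "f (x + h *\<^sub>R u + h *\<^sub>R v) - f (x + h *\<^sub>R u) - f (x + h *\<^sub>R v) + f x = F h - F 0"
    by (simp add: F_def algebra_simps)
  also have "\<dots> = h * (G h - G 0)" using s(2) by (simp add: G_def algebra_simps)
  also have "\<dots> = h * h * fuv (x + s *\<^sub>R u + t *\<^sub>R v)" using t(2) by simp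
  finally have diff: "f (x + h *\<^sub>R u + h *\<^sub>R v) - f (x + h *\<^sub>R u) - f (x + h *\<^sub>R v) + f x
      = h * h * fuv (x + s *\<^sub>R u + t *\<^sub>R v)" .
  have "norm (s *\<^sub>R u + t *\<^sub>R v) \<le> \<bar>s\<bar> * norm u + \<bar>t\<bar> * norm v"
    using norm_triangle_ineq[of "s *\<^sub>R u" "t *\<^sub>R v"] by simp
  also have "\<dots> \<le> \<bar>h\<bar> * (norm u + norm v)"
    using s(1) t(1) by (simp add: distrib_left add_mono mult_right_mono)
  finally show ?thesis
    using that[of "x + s *\<^sub>R u + t *\<^sub>R v"] diff by (simp add: add.assoc)
qed

lemma mixed_directional_derivatives_commute:
  fixes f :: "'a::real_normed_vector \<Rightarrow> real"
  assumes fu: "\<And>x. ((\<lambda>t. f (x + t *\<^sub>R u)) has_real_derivative fu x) (at 0)"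
    and fuv: "\<And>x. ((\<lambda>t. fu (x + t *\<^sub>R v)) has_real_derivative fuv x) (at 0)"
    and fv: "\<And>x. ((\<lambda>t. f (x + t *\<^sub>R v)) has_real_derivative fv x) (at 0)"
    and fvu: "\<And>x. ((\<lambda>t. fv (x + t *\<^sub>R u)) has_real_derivative fvu x) (at 0)"
    and "continuous_on UNIV fuv" and "continuous_on UNIV fvu"
  shows "fuv x = fvu x"
proof -
  define h :: "nat \<Rightarrow> real" where "h n = 1 / Suc n" for n
  define r where "r = (\<lambda>n. \<bar>h n\<bar> * (norm u + norm v))"
  have h_nz: "h n \<noteq> 0" for n by (simp add: h_def)
  have "r \<longlonglongrightarrow> 0"
    using tendsto_mult_left_zero[OF LIMSEQ_inverse_real_of_nat, of "norm u + norm v"]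
    by (simp add: r_def h_def inverse_eq_divide)
  then have to_x: "p \<longlonglongrightarrow> x" if "\<And>n. norm (p n - x) \<le> r n" for p
    using Lim_null_comparison[of "\<lambda>n. p n - x" r] that by (simp add: LIM_zero_iff)
  have "\<exists>p q. norm (p - x) \<le> r n \<and> norm (q - x) \<le> r n \<and> fuv p = fvu q" for n
  proof -
    obtain p where p: "norm (p - x) \<le> r n"
      "f (x + h n *\<^sub>R u + h n *\<^sub>R v) - f (x + h n *\<^sub>R u) - f (x + h n *\<^sub>R v) + f x = h n * h n * fuv p"
      using second_difference_mean_value[OF fu fuv h_nz] unfolding r_def by blast
    obtain q where q: "norm (q - x) \<le> r n"
      "f (x + h n *\<^sub>R v + h n *\<^sub>R u) - f (x + h n *\<^sub>R v) - f (x + h n *\<^sub>R u) + f x = h n * h n * fvu q"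
      using second_difference_mean_value[OF fv fvu h_nz] unfolding r_def by (metis add.commute)
    have "h n * h n * fuv p = h n * h n * fvu q"
      using p(2) q(2) by (simp add: algebra_simps)
    then show ?thesis using p(1) q(1) h_nz by auto
  qed
  then obtain p q where pq: "\<And>n. norm (p n - x) \<le> r n" "\<And>n. norm (q n - x) \<le> r n"
    "\<And>n. fuv (p n) = fvu (q n)" by metis
  have "(\<lambda>n. fuv (p n)) \<longlonglongrightarrow> fuv x"
    using assms(5) to_x[OF pq(1)] by (auto intro: continuous_on_tendsto_compose)
  moreover have "(\<lambda>n. fuv (p n)) \<longlonglongrightarrow> fvu x"
    unfolding pq(3) using assms(6) to_x[OF pq(2)] by (auto intro: continuous_on_tendsto_compose)
  ultimately show ?thesis by (rule LIMSEQ_unique)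
qed

lemma cont_partials_upto_continuous:
  "cont_partials_upto m f \<Longrightarrow> length xs \<le> m \<Longrightarrow> continuous_on UNIV (pdl xs f)"
  unfolding cont_partials_upto_def by blast

lemma cont_partials_upto_derivative:
  "cont_partials_upto m f \<Longrightarrow> length xs < m \<Longrightarrow>
   ((\<lambda>t. pdl xs f (x + t *\<^sub>R axis i 1)) has_real_derivative pdl (i # xs) f x) (at 0)"
  unfolding cont_partials_upto_def by blast

lemma pdl_swap:
  assumes f: "cont_partials_upto m f" and "length xs + 2 \<le> m"
  shows "pdl (i # j # xs) f = pdl (j # i # xs) f"
proof
  fix x
  have d: "((\<lambda>t. pdl ys f (y + t *\<^sub>R axis k 1)) has_real_derivative pdl (k # ys) f y) (at 0)"
    if "length ys \<le> length xs + 1" for ys k y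
    by (rule cont_partials_upto_derivative[OF f]) (use that assms(2) in simp)
  show "pdl (i # j # xs) f x = pdl (j # i # xs) f x"
    by (rule mixed_directional_derivatives_commute[OF d d d d])
      (use assms(2) cont_partials_upto_continuous[OF f, of "i # j # xs"]
         cont_partials_upto_continuous[OF f, of "j # i # xs"] in simp_all)
qed

lemma pdl_move_to_front:
  assumes "cont_partials_upto m f"
  shows "length (xs @ i # js) \<le> m \<Longrightarrow> pdl (xs @ i # js) f = pdl (i # xs @ js) f"
proof (induction xs)
  case (Cons j xs)
  then have "pdl ((j # xs) @ i # js) f = pdl (j # i # xs @ js) f" by simp
  also have "\<dots> = pdl (i # j # xs @ js) f"
    by (rule pdl_swap[OF assms]) (use Cons.prems in simp)
  finally show ?case by simp
qed simp

lemma pdl_mset_eq: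
  assumes "cont_partials_upto m f"
  shows "length xs \<le> m \<Longrightarrow> mset xs = mset js \<Longrightarrow> pdl xs f = pdl js f"
proof (induction xs arbitrary: js)
  case (Cons i xs)
  then obtain js1 js2 where js: "js = js1 @ i # js2"
    by (metis list.set_intros(1) set_mset_mset split_list)
  have "pdl js f = pdl (i # js1 @ js2) f"
    unfolding js by (rule pdl_move_to_front[OF assms]) (metis Cons.prems js mset_eq_length)
  moreover have "pdl xs f = pdl (js1 @ js2) f"
    by (rule Cons.IH) (use Cons.prems js in auto)
  ultimately show ?case by simp
qed simp

lemma ex_count_list_eq:
  fixes \<alpha> :: "'a::finite \<Rightarrow> nat"
  shows "\<exists>xs. count_list xs = \<alpha>"
proof -
  have "count (Abs_multiset \<alpha>) = \<alpha>" by (simp add: count_Abs_multiset)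
  moreover obtain xs where "mset xs = Abs_multiset \<alpha>" using ex_mset by blast
  ultimately show ?thesis by (metis count_mset ext)
qed

lemma mi_order_count_list: "mi_order (count_list xs) = length xs"
  unfolding mi_order_def by (simp add: sum_count_set)

lemma mderiv_count_list:
  assumes "cont_partials_upto m f" and "length xs \<le> m"
  shows "mderiv (count_list xs) f = pdl xs f"
proof -
  let ?js = "SOME js. \<forall>i. count_list js i = count_list xs i"
  have "\<forall>i. count_list ?js i = count_list xs i" by (rule someI[of _ xs]) simp
  then have "mset ?js = mset xs" by (simp add: multiset_eq_iff count_mset)
  then show ?thesis
    unfolding mderiv_def using pdl_mset_eq[OF assms(1)] assms(2) by metis
qed

lemma obtain_count_list:
  fixes \<alpha> :: "'a::finite \<Rightarrow> nat"
  obtains xs where "\<alpha> = count_list xs" and "length xs = mi_order \<alpha>"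
  using ex_count_list_eq[of \<alpha>] mi_order_count_list by metis

section \<open>Integration by parts for functions supported in the unit ball\<close>

definition cont_supp_unit_ball :: "('a::real_normed_vector \<Rightarrow> real) \<Rightarrow> bool" where
  "cont_supp_unit_ball f \<longleftrightarrow> continuous_on UNIV f \<and> (\<forall>x. 1 < norm x \<longrightarrow> f x = 0)"

lemma cont_supp_unit_ball_integrable:
  fixes f :: "'a::euclidean_space \<Rightarrow> real"
  assumes "cont_supp_unit_ball f"
  shows "integrable lborel f"
proof -
  have "integrable lborel (\<lambda>x. indicator (cball 0 1) x *\<^sub>R f x)"
    by (rule borel_integrable_compact)
      (use assms in \<open>auto simp: cont_supp_unit_ball_def intro: continuous_on_subset\<close>)
  moreover have "(\<lambda>x. indicator (cball 0 1) x *\<^sub>R f x) = f"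
    using assms by (auto simp: cont_supp_unit_ball_def indicator_def fun_eq_iff)
  ultimately show ?thesis by simp
qed

lemma cont_supp_unit_ball_bounded:
  fixes f :: "'a::euclidean_space \<Rightarrow> real"
  assumes "cont_supp_unit_ball f"
  obtains B where "\<And>x. \<bar>f x\<bar> \<le> B"
proof -
  have "continuous_on (cball 0 1) f"
    using assms continuous_on_subset[of UNIV f "cball 0 1"] by (simp add: cont_supp_unit_ball_def)
  then have "compact (f ` cball 0 1)" by (simp add: compact_continuous_image)
  then have "bounded (f ` cball 0 1)" by (rule compact_imp_bounded)
  then obtain B where "\<forall>y\<in>f ` cball 0 1. norm y \<le> B"
    unfolding bounded_iff by blast
  then have B: "\<And>x. x \<in> cball 0 1 \<Longrightarrow> \<bar>f x\<bar> \<le> B" by simp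
  have "\<bar>f x\<bar> \<le> max B 0" for x
    using B[of x] assms by (cases "norm x \<le> 1") (auto simp: cont_supp_unit_ball_def)
  then show ?thesis using that by blast
qed

lemma cont_supp_unit_ball_mult:
  "cont_supp_unit_ball f \<Longrightarrow> continuous_on UNIV g \<Longrightarrow> cont_supp_unit_ball (\<lambda>x. f x * g x)"
  "continuous_on UNIV f \<Longrightarrow> cont_supp_unit_ball g \<Longrightarrow> cont_supp_unit_ball (\<lambda>x. f x * g x)"
  unfolding cont_supp_unit_ball_def by (auto intro: continuous_intros)

lemma cont_supp_unit_ball_integrable_mult:
  fixes f g :: "'a::euclidean_space \<Rightarrow> real"
  assumes "cont_supp_unit_ball f" and "continuous_on UNIV g"
  shows "integrable lborel (\<lambda>x. f x * g x)"
  by (rule cont_supp_unit_ball_integrable[OF cont_supp_unit_ball_mult(1)[OF assms]])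

lemma continuous_on_translate:
  fixes f :: "'a::real_normed_vector \<Rightarrow> 'b::topological_space"
  shows "continuous_on UNIV f \<Longrightarrow> continuous_on UNIV (\<lambda>x. f (x + c))"
  by (rule continuous_on_compose2[of UNIV f]) (auto intro: continuous_intros)

lemma lborel_integral_translate:
  fixes F :: "'a::euclidean_space \<Rightarrow> real"
  assumes "F \<in> borel_measurable borel"
  shows "(LINT x|lborel. F (c + x)) = (LINT x|lborel. F x)"
proof -
  have "(LINT x|lborel. F x) = (LINT x|distr lborel borel ((+) c). F x)"
    by (simp add: lborel_distr_plus)
  also have "\<dots> = (LINT x|lborel. F (c + x))"
    by (rule integral_distr) (use assms in auto)
  finally show ?thesis ..
qed

lemma difference_quotient_integral_tendsto:
  fixes f g f' :: "'a::euclidean_space \<Rightarrow> real"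
  assumes f: "cont_supp_unit_ball f" and g: "cont_supp_unit_ball g" and f': "cont_supp_unit_ball f'"
    and df: "\<And>x. ((\<lambda>t. f (x + t *\<^sub>R v)) has_real_derivative f' x) (at 0)"
    and t: "t \<longlonglongrightarrow> 0" "\<And>n. t n \<noteq> 0"
  shows "(\<lambda>n. LINT x|lborel. (f (x + t n *\<^sub>R v) - f x) / t n * g x) \<longlonglongrightarrow> (LINT x|lborel. f' x * g x)"
proof -
  obtain B where B: "\<And>x. \<bar>f' x\<bar> \<le> B" using cont_supp_unit_ball_bounded[OF f'] by blast
  have cont: "continuous_on UNIV f" "continuous_on UNIV g" "continuous_on UNIV f'"
    using f g f' by (auto simp: cont_supp_unit_ball_def)
  show ?thesis
  proof (rule integral_dominated_convergence[where w="\<lambda>x. B * \<bar>g x\<bar>"])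
    show "(\<lambda>x. f' x * g x) \<in> borel_measurable lborel"
      using cont by (auto intro!: borel_measurable_continuous_onI continuous_intros)
    show "(\<lambda>x. (f (x + t n *\<^sub>R v) - f x) / t n * g x) \<in> borel_measurable lborel" for n
      using continuous_on_translate[OF cont(1), of "t n *\<^sub>R v"] cont t(2)[of n]
      by (auto intro!: borel_measurable_continuous_onI continuous_intros)
    show "integrable lborel (\<lambda>x. B * \<bar>g x\<bar>)"
      using cont_supp_unit_ball_integrable[OF g] by auto
    show "AE x in lborel. (\<lambda>n. (f (x + t n *\<^sub>R v) - f x) / t n * g x) \<longlonglongrightarrow> f' x * g x"
    proof (rule AE_I2)
      fix x
      have "((\<lambda>h. (f (x + h *\<^sub>R v) - f x) / h) \<longlongrightarrow> f' x) (at 0)"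
        using df[of x] by (simp add: DERIV_def)
      moreover have "filterlim t (at 0) sequentially"
        using t by (auto simp: filterlim_at)
      ultimately have "(\<lambda>n. (f (x + t n *\<^sub>R v) - f x) / t n) \<longlonglongrightarrow> f' x"
        by (rule filterlim_compose)
      then show "(\<lambda>n. (f (x + t n *\<^sub>R v) - f x) / t n * g x) \<longlonglongrightarrow> f' x * g x"
        by (intro tendsto_intros)
    qed
    show "AE x in lborel. norm ((f (x + t n *\<^sub>R v) - f x) / t n * g x) \<le> B * \<bar>g x\<bar>" for n
    proof (rule AE_I2)
      fix x
      have "((\<lambda>s. f (x + s *\<^sub>R v)) has_real_derivative f' (x + s *\<^sub>R v)) (at s)" for s
        by (rule has_real_derivative_along_line) (rule df)
      then obtain z where "\<bar>z\<bar> \<le> \<bar>t n\<bar>"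
        and "f (x + t n *\<^sub>R v) - f (x + 0 *\<^sub>R v) = t n * f' (x + z *\<^sub>R v)"
        by (rule mean_value_from_origin[OF _ t(2)])
      then have "(f (x + t n *\<^sub>R v) - f x) / t n = f' (x + z *\<^sub>R v)"
        using t(2)[of n] by simp
      then show "norm ((f (x + t n *\<^sub>R v) - f x) / t n * g x) \<le> B * \<bar>g x\<bar>"
        using B[of "x + z *\<^sub>R v"] by (simp add: abs_mult mult_right_mono)
    qed
  qed
qed

text \<open>Translating the integration variable turns the forward difference quotient of \<open>f\<close>
  against \<open>g\<close> into minus the backward difference quotient of \<open>g\<close> against \<open>f\<close>.\<close>

lemma integration_by_parts_directional:
  fixes f g f' g' :: "'a::euclidean_space \<Rightarrow> real"
  assumes f: "cont_supp_unit_ball f" and g: "cont_supp_unit_ball g"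
    and f': "cont_supp_unit_ball f'" and g': "cont_supp_unit_ball g'"
    and df: "\<And>x. ((\<lambda>t. f (x + t *\<^sub>R v)) has_real_derivative f' x) (at 0)"
    and dg: "\<And>x. ((\<lambda>t. g (x + t *\<^sub>R v)) has_real_derivative g' x) (at 0)"
  shows "(LINT x|lborel. f' x * g x) = - (LINT x|lborel. f x * g' x)"
proof -
  have cf: "continuous_on UNIV f" and cg: "continuous_on UNIV g"
    using f g by (auto simp: cont_supp_unit_ball_def)
  define h :: "nat \<Rightarrow> real" where "h = (\<lambda>n. 1 / Suc n)"
  have h_nz: "h n \<noteq> 0" "- h n \<noteq> 0" for n by (simp_all add: h_def)
  have h: "h \<longlonglongrightarrow> 0"
    using LIMSEQ_inverse_real_of_nat by (simp add: h_def inverse_eq_divide)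
  have minus_h: "(\<lambda>n. - h n) \<longlonglongrightarrow> 0"
    using tendsto_minus[OF h] by simp
  have eq: "(LINT x|lborel. (f (x + h n *\<^sub>R v) - f x) / h n * g x)
      = - (LINT x|lborel. (g (x + (- h n) *\<^sub>R v) - g x) / (- h n) * f x)" for n
  proof -
    let ?c = "h n *\<^sub>R v"
    have int: "integrable lborel (\<lambda>x. f (x + ?c) * g x)" "integrable lborel (\<lambda>x. f x * g (x - ?c))"
      "integrable lborel (\<lambda>x. f x * g x)"
      using cont_supp_unit_ball_integrable[OF cont_supp_unit_ball_mult(2)[OF continuous_on_translate[OF cf] g]]
        cont_supp_unit_ball_integrable_mult[OF f continuous_on_translate[OF cg, of "- ?c"]]
        cont_supp_unit_ball_integrable_mult[OF f cg] by simp_all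
    have "(\<lambda>x. f x * g (x - ?c)) \<in> borel_measurable borel"
      using continuous_on_translate[OF cg, of "- ?c"] cf
      by (auto intro!: borel_measurable_continuous_onI continuous_intros)
    then have tr: "(LINT x|lborel. f x * g (x - ?c)) = (LINT x|lborel. f (x + ?c) * g x)"
      using lborel_integral_translate[of "\<lambda>x. f x * g (x - ?c)" ?c] by (simp add: add.commute)
    have "(LINT x|lborel. (f (x + ?c) - f x) / h n * g x)
        = (LINT x|lborel. (f (x + ?c) * g x - f x * g x) / h n)"
      by (intro Bochner_Integration.integral_cong) (auto simp: algebra_simps)
    also have "\<dots> = ((LINT x|lborel. f x * g (x - ?c)) - (LINT x|lborel. f x * g x)) / h n"
      using int tr by simp
    also have "\<dots> = (LINT x|lborel. (f x * g (x - ?c) - f x * g x) / h n)"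
      using int by simp
    also have "\<dots> = - (LINT x|lborel. (g (x + (- h n) *\<^sub>R v) - g x) / (- h n) * f x)"
      by (subst integral_minus[symmetric], intro Bochner_Integration.integral_cong)
         (auto simp: algebra_simps divide_simps h_nz)
    finally show ?thesis .
  qed
  have "(\<lambda>n. LINT x|lborel. (f (x + h n *\<^sub>R v) - f x) / h n * g x) \<longlonglongrightarrow> - (LINT x|lborel. g' x * f x)"
    unfolding eq by (intro tendsto_minus difference_quotient_integral_tendsto[OF g f g' dg minus_h h_nz(2)])
  moreover have "(\<lambda>n. LINT x|lborel. (f (x + h n *\<^sub>R v) - f x) / h n * g x) \<longlonglongrightarrow> (LINT x|lborel. f' x * g x)"
    by (rule difference_quotient_integral_tendsto[OF f g f' df h h_nz(1)])
  ultimately have "(LINT x|lborel. f' x * g x) = - (LINT x|lborel. g' x * f x)"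
    by (rule LIMSEQ_unique[rotated])
  then show ?thesis by (simp add: mult.commute)
qed

section \<open>Derivatives of a kernel satisfying (K1)\<close>

lemma K1_cont_partials_upto: "K1 K \<Longrightarrow> cont_partials_upto 4 K"
  unfolding K1_def by blast

lemma K1_vanishes_outside_unit_ball: "K1 K \<Longrightarrow> 1 < norm x \<Longrightarrow> K x = 0"
  unfolding K1_def by blast

lemma K1_radial: "K1 K \<Longrightarrow> norm x = norm y \<Longrightarrow> K x = K y"
  unfolding K1_def by blast

lemma K1_integral_eq_1: "K1 K \<Longrightarrow> (LINT x|lborel. K x) = 1"
  unfolding K1_def by blast

lemma mi_order_update_Suc: "mi_order (\<alpha>(i := Suc (\<alpha> i))) = Suc (mi_order \<alpha>)"
proof -
  have "mi_order (\<alpha>(i := Suc (\<alpha> i))) = (\<Sum>j\<in>UNIV. \<alpha> j + (if j = i then 1 else 0))"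
    unfolding mi_order_def by (intro sum.cong) auto
  also have "\<dots> = Suc (mi_order \<alpha>)" by (simp add: sum.distrib mi_order_def)
  finally show ?thesis .
qed

lemma pdl_vanishes_outside_unit_ball:
  assumes f: "cont_partials_upto m f" and supp: "\<And>x. 1 < norm x \<Longrightarrow> f x = 0"
  shows "length xs \<le> m \<Longrightarrow> 1 < norm x \<Longrightarrow> pdl xs f x = 0"
proof (induction xs arbitrary: x)
  case (Cons i xs)
  let ?line = "\<lambda>t. pdl xs f (x + t *\<^sub>R axis i (1::real))"
  have line_0: "?line t = 0" if "\<bar>t\<bar> < norm x - 1" for t
  proof (rule Cons.IH)
    have "norm x \<le> norm (x + t *\<^sub>R axis i 1) + \<bar>t\<bar>"
      using norm_triangle_ineq4[of "x + t *\<^sub>R axis i 1" "t *\<^sub>R axis i 1"] by simp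
    then show "1 < norm (x + t *\<^sub>R axis i 1)" using that by linarith
  qed (use Cons.prems in simp)
  have "eventually (\<lambda>t. ?line t = 0) (nhds 0)"
    unfolding eventually_nhds_metric
  proof (intro exI conjI allI impI)
    show "0 < norm x - 1" using Cons.prems(2) by simp
    show "?line t = 0" if "dist t 0 < norm x - 1" for t
      using line_0 that by (simp add: dist_real_def)
  qed
  then have "(?line has_real_derivative 0) (at 0)"
    by (subst DERIV_cong_ev[OF refl _ refl]) (auto intro: DERIV_const)
  moreover have "(?line has_real_derivative pdl (i # xs) f x) (at 0)"
    by (rule cont_partials_upto_derivative[OF f]) (use Cons.prems in simp)
  ultimately show ?case by (metis DERIV_unique)
qed (use supp in simp)

lemma mderiv_cont_supp_unit_ball:
  assumes "K1 K" and "mi_order \<alpha> \<le> 4"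
  shows "cont_supp_unit_ball (mderiv \<alpha> K)"
proof -
  obtain xs where "\<alpha> = count_list xs" and len: "length xs = mi_order \<alpha>"
    by (rule obtain_count_list)
  then have "mderiv \<alpha> K = pdl xs K"
    using mderiv_count_list[OF K1_cont_partials_upto[OF assms(1)]] assms(2) by simp
  moreover have "continuous_on UNIV (pdl xs K)"
    using cont_partials_upto_continuous[OF K1_cont_partials_upto[OF assms(1)]] assms len by simp
  moreover have "pdl xs K x = 0" if "1 < norm x" for x
    using pdl_vanishes_outside_unit_ball[OF K1_cont_partials_upto[OF assms(1)]
        K1_vanishes_outside_unit_ball[OF assms(1)]] assms len that by simp
  ultimately show ?thesis unfolding cont_supp_unit_ball_def by simp
qed

lemma mderiv_derivative:
  assumes f: "cont_partials_upto m f" and "mi_order \<alpha> < m"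
  shows "((\<lambda>t. mderiv \<alpha> f (x + t *\<^sub>R axis i 1)) has_real_derivative mderiv (\<alpha>(i := Suc (\<alpha> i))) f x) (at 0)"
proof -
  obtain xs where xs: "\<alpha> = count_list xs" and len: "length xs = mi_order \<alpha>"
    by (rule obtain_count_list)
  have "\<alpha>(i := Suc (\<alpha> i)) = count_list (i # xs)" by (auto simp: xs fun_eq_iff)
  then show ?thesis
    using cont_partials_upto_derivative[OF f, of xs x i] assms(2)
    by (simp add: xs len mderiv_count_list[OF f])
qed

lemma mderiv_integration_by_parts:
  assumes K: "K1 K" and "mi_order \<alpha> \<le> 3" and "mi_order \<beta> \<le> 3"
  shows "(LINT x|lborel. mderiv (\<alpha>(i := Suc (\<alpha> i))) K x * mderiv \<beta> K x)
       = - (LINT x|lborel. mderiv \<alpha> K x * mderiv (\<beta>(i := Suc (\<beta> i))) K x)"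
  by (rule integration_by_parts_directional[OF mderiv_cont_supp_unit_ball[OF K]
        mderiv_cont_supp_unit_ball[OF K] mderiv_cont_supp_unit_ball[OF K]
        mderiv_cont_supp_unit_ball[OF K] mderiv_derivative[OF K1_cont_partials_upto[OF K]]
        mderiv_derivative[OF K1_cont_partials_upto[OF K]]])
     (use assms in \<open>simp_all add: mi_order_update_Suc del: fun_upd_apply\<close>)

lemma cross_integral_le_mean_sq_int:
  assumes K: "K1 K" and "mi_order \<alpha> \<le> 4" and "mi_order \<beta> \<le> 4"
  shows "(LINT x|lborel. mderiv \<alpha> K x * mderiv \<beta> K x) \<le> (sq_int \<alpha> K + sq_int \<beta> K) / 2"
proof -
  have a: "cont_supp_unit_ball (mderiv \<alpha> K)" and b: "cont_supp_unit_ball (mderiv \<beta> K)"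
    using mderiv_cont_supp_unit_ball[OF K] assms by auto
  then have int: "integrable lborel (\<lambda>x. mderiv \<alpha> K x * mderiv \<beta> K x)"
    "integrable lborel (\<lambda>x. (mderiv \<alpha> K x)\<^sup>2)" "integrable lborel (\<lambda>x. (mderiv \<beta> K x)\<^sup>2)"
    using cont_supp_unit_ball_integrable_mult[OF a] cont_supp_unit_ball_integrable_mult[OF b]
    by (simp_all add: power2_eq_square cont_supp_unit_ball_def)
  have "(LINT x|lborel. mderiv \<alpha> K x * mderiv \<beta> K x)
      \<le> (LINT x|lborel. ((mderiv \<alpha> K x)\<^sup>2 + (mderiv \<beta> K x)\<^sup>2) / 2)"
  proof (rule integral_mono[OF int(1)])
    show "integrable lborel (\<lambda>x. ((mderiv \<alpha> K x)\<^sup>2 + (mderiv \<beta> K x)\<^sup>2) / 2)"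
      using int by simp
    show "mderiv \<alpha> K x * mderiv \<beta> K x \<le> ((mderiv \<alpha> K x)\<^sup>2 + (mderiv \<beta> K x)\<^sup>2) / 2" for x
      using sum_squares_bound[of "mderiv \<alpha> K x" "mderiv \<beta> K x"] by simp
  qed
  also have "\<dots> = (sq_int \<alpha> K + sq_int \<beta> K) / 2"
    unfolding sq_int_def using int by simp
  finally show ?thesis .
qed

lemma directional_derivative_zero_imp_zero:
  fixes f :: "'a::real_normed_vector \<Rightarrow> real"
  assumes "\<And>x. ((\<lambda>t. f (x + t *\<^sub>R e)) has_real_derivative 0) (at 0)"
    and "norm e = 1" and supp: "\<And>x. 1 < norm x \<Longrightarrow> f x = 0"
  shows "f x = 0"
proof -
  let ?T = "norm x + 2"
  have "\<And>t. ((\<lambda>t. f (x + t *\<^sub>R e)) has_real_derivative 0) (at t)"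
    using has_real_derivative_along_line[of f e "\<lambda>_. 0", OF assms(1)] by simp
  then have "f (x + 0 *\<^sub>R e) = f (x + ?T *\<^sub>R e)"
    using DERIV_isconst_all[of "\<lambda>t. f (x + t *\<^sub>R e)" 0 ?T] by blast
  also have "\<dots> = 0"
  proof (rule supp)
    have "?T \<le> norm (x + ?T *\<^sub>R e) + norm x"
      using norm_triangle_ineq4[of "x + ?T *\<^sub>R e" x] assms(2) by simp
    then show "1 < norm (x + ?T *\<^sub>R e)" by linarith
  qed
  finally show ?thesis by simp
qed

lemma pdl_eq_0_imp_eq_0:
  assumes f: "cont_partials_upto m f" and supp: "\<And>x. 1 < norm x \<Longrightarrow> f x = 0"
  shows "length xs \<le> m \<Longrightarrow> (\<And>y. pdl xs f y = 0) \<Longrightarrow> f x = 0"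
proof (induction xs)
  case (Cons i xs)
  show ?case
  proof (rule Cons.IH)
    show "pdl xs f y = 0" for y
    proof (rule directional_derivative_zero_imp_zero[where e = "axis i 1"])
      show "((\<lambda>t. pdl xs f (z + t *\<^sub>R axis i 1)) has_real_derivative 0) (at 0)" for z
        using cont_partials_upto_derivative[OF f, of xs z i] Cons.prems by simp
      show "1 < norm z \<Longrightarrow> pdl xs f z = 0" for z
        using pdl_vanishes_outside_unit_ball[OF f supp] Cons.prems(1) by simp
    qed simp
  qed (use Cons.prems in simp)
qed simp

lemma continuous_eq_0_if_integral_square_eq_0:
  fixes f :: "'a::euclidean_space \<Rightarrow> real"
  assumes "continuous_on UNIV f" and "integrable lborel (\<lambda>x. (f x)\<^sup>2)"
    and "(LINT x|lborel. (f x)\<^sup>2) = 0"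
  shows "f x = 0"
proof -
  have "AE x in lborel. (f x)\<^sup>2 = 0"
    using integral_nonneg_eq_0_iff_AE[OF assms(2)] assms(3) by simp
  then have "AE x in lebesgue. x \<in> {x. f x = 0}" by (intro AE_completion) simp
  moreover have "closed {x. f x = 0}"
    using continuous_closed_preimage_constant[OF assms(1) closed_UNIV, of 0] by simp
  ultimately show ?thesis using mem_closed_if_AE_lebesgue by blast
qed

text \<open>If \<open>K\<^sup>(\<^sup>\<gamma>\<^sup>)\<close> vanished identically, integrating back along coordinate lines from outside
  the unit ball would give \<open>K = 0\<close>, contradicting \<open>\<integral>K = 1\<close>.\<close>

lemma sq_int_pos:
  assumes K: "K1 K" and "mi_order \<gamma> \<le> 4"
  shows "0 < sq_int \<gamma> K"
proof -
  obtain xs where xs: "\<gamma> = count_list xs" and len: "length xs = mi_order \<gamma>"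
    by (rule obtain_count_list)
  have D: "mderiv \<gamma> K = pdl xs K"
    using mderiv_count_list[OF K1_cont_partials_upto[OF K]] xs len assms(2) by simp
  have supp: "cont_supp_unit_ball (pdl xs K)"
    using mderiv_cont_supp_unit_ball[OF K assms(2)] D by simp
  have "sq_int \<gamma> K \<noteq> 0"
  proof
    assume "sq_int \<gamma> K = 0"
    have cont: "continuous_on UNIV (pdl xs K)"
      using supp by (simp add: cont_supp_unit_ball_def)
    have "integrable lborel (\<lambda>x. (pdl xs K x)\<^sup>2)"
      using cont_supp_unit_ball_integrable_mult[OF supp cont] by (simp add: power2_eq_square)
    then have zero: "pdl xs K y = 0" for y
      by (rule continuous_eq_0_if_integral_square_eq_0[OF cont])
        (use \<open>sq_int \<gamma> K = 0\<close> in \<open>simp add: sq_int_def D\<close>)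
    have "K x = 0" for x
      using pdl_eq_0_imp_eq_0[OF K1_cont_partials_upto[OF K] K1_vanishes_outside_unit_ball[OF K] _ zero]
        len assms(2) by simp
    then show False using K1_integral_eq_1[OF K] by simp
  qed
  then show ?thesis by (simp add: sq_int_def order_less_le)
qed

section \<open>Invariance under signed coordinate permutations\<close>

definition sign_perm :: "('n::finite \<Rightarrow> real) \<Rightarrow> ('n \<Rightarrow> 'n) \<Rightarrow> real^'n \<Rightarrow> real^'n" where
  "sign_perm s p x = (\<chi> j. s j * x $ p j)"

lemma norm_sign_perm:
  assumes p: "p permutes UNIV" and s: "\<And>j. \<bar>s j\<bar> = 1"
  shows "norm (sign_perm s p x) = norm x"
proof -
  have "(\<Sum>j\<in>UNIV. (s j * x $ p j)\<^sup>2) = (\<Sum>j\<in>UNIV. (x $ p j)\<^sup>2)"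
    using s by (intro sum.cong refl) (metis abs_mult_self_eq mult.left_neutral power2_eq_square power_mult_distrib)
  also have "\<dots> = (\<Sum>j\<in>UNIV. (x $ j)\<^sup>2)"
    using sum.reindex_bij_betw[OF permutes_imp_bij[OF p], of "\<lambda>j. (x $ j)\<^sup>2"] by simp
  finally show ?thesis unfolding norm_vec_def L2_set_def sign_perm_def by simp
qed

lemma sign_perm_add_axis:
  assumes "p permutes UNIV"
  shows "sign_perm s p (x + t *\<^sub>R axis j 1) = sign_perm s p x + (s (inv p j) * t) *\<^sub>R axis (inv p j) 1"
proof -
  have "p k = j \<longleftrightarrow> k = inv p j" for k
    using assms by (metis permutes_inverses(1,2))
  then show ?thesis unfolding sign_perm_def by (auto simp: vec_eq_iff axis_def algebra_simps)
qed

lemma pdl_sign_perm: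
  assumes f: "cont_partials_upto m f" and p: "p permutes UNIV"
    and inv: "\<And>x. f (sign_perm s p x) = f x"
  shows "length xs \<le> m \<Longrightarrow>
    pdl xs f x = prod_list (map (\<lambda>j. s (inv p j)) xs) * pdl (map (inv p) xs) f (sign_perm s p x)"
proof (induction xs arbitrary: x)
  case (Cons j xs)
  define k where "k = inv p j"
  define c where "c = prod_list (map (\<lambda>j. s (inv p j)) xs)"
  define ys where "ys = map (inv p) xs"
  have IH: "pdl xs f y = c * pdl ys f (sign_perm s p y)" for y
    using Cons unfolding c_def ys_def by simp
  have "((\<lambda>u. pdl ys f (sign_perm s p x + u *\<^sub>R axis k 1)) has_real_derivative
      pdl (k # ys) f (sign_perm s p x)) (at (s k * 0))"
    using cont_partials_upto_derivative[OF f, of ys "sign_perm s p x" k] Cons.prems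
    by (simp add: ys_def)
  from DERIV_chain2[OF this DERIV_cmult[OF DERIV_ident, of "s k" 0]]
  have "((\<lambda>t. c * pdl ys f (sign_perm s p x + (s k * t) *\<^sub>R axis k 1)) has_real_derivative
      c * (pdl (k # ys) f (sign_perm s p x) * s k)) (at 0)"
    by (intro DERIV_cmult) simp
  moreover have "(\<lambda>t. pdl xs f (x + t *\<^sub>R axis j 1))
      = (\<lambda>t. c * pdl ys f (sign_perm s p x + (s k * t) *\<^sub>R axis k 1))"
    by (simp add: IH sign_perm_add_axis[OF p] k_def)
  ultimately have "pdl (j # xs) f x = c * (pdl (k # ys) f (sign_perm s p x) * s k)"
    by (simp add: partial_def DERIV_imp_deriv)
  then show ?case by (simp add: c_def ys_def k_def)
qed (simp add: inv)

lemma prod_Basis_vec: "(\<Prod>b\<in>(Basis :: (real^'n) set). f b) = (\<Prod>i\<in>UNIV. f (axis i 1))"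
proof -
  have B: "(Basis :: (real^'n) set) = (\<lambda>i. axis i 1) ` UNIV" unfolding Basis_vec_def by auto
  have "inj (\<lambda>i::'n. axis i (1::real))" by (auto intro!: injI simp: axis_eq_axis)
  then show ?thesis unfolding B by (simp add: prod.reindex)
qed

lemma sign_perm_borel_measurable: "sign_perm s p \<in> borel_measurable borel"
  unfolding sign_perm_def by (intro borel_measurable_continuous_onI) (auto intro!: continuous_intros)

text \<open>The preimage of a box is again a box with the same side lengths, permuted.\<close>

lemma distr_lborel_sign_perm:
  fixes s :: "'n::finite \<Rightarrow> real"
  assumes p: "p permutes UNIV" and s: "\<And>j. s j = 1 \<or> s j = -1"
  shows "distr lborel borel (sign_perm s p) = lborel"
proof (rule lborel_eqI[symmetric])
  show "sets (distr lborel borel (sign_perm s p)) = sets borel" by simp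
  fix l u :: "real^'n"
  assume lu: "\<And>b. b \<in> Basis \<Longrightarrow> l \<bullet> b \<le> u \<bullet> b"
  have lu': "l $ i \<le> u $ i" for i using lu[of "axis i 1"] by (auto simp: Basis_vec_def inner_axis)
  define l' :: "real^'n" where "l' = (\<chi> j. if s (inv p j) = 1 then l $ inv p j else - u $ inv p j)"
  define u' :: "real^'n" where "u' = (\<chi> j. if s (inv p j) = 1 then u $ inv p j else - l $ inv p j)"
  have pinv: "p (inv p j) = j" "inv p (p j) = j" for j using p by (meson permutes_inverses)+
  have "sign_perm s p -` box l u = box l' u'"
  proof (intro set_eqI iffI)
    fix x assume "x \<in> sign_perm s p -` box l u"
    then have A: "\<And>m. l $ m < s m * x $ p m \<and> s m * x $ p m < u $ m"
      by (simp add: mem_box_cart sign_perm_def)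
    show "x \<in> box l' u'" unfolding mem_box_cart
    proof
      fix j
      show "l' $ j < x $ j \<and> x $ j < u' $ j"
        using A[of "inv p j"] s[of "inv p j"] unfolding l'_def u'_def
        by (cases "s (inv p j) = 1") (auto simp: pinv)
    qed
  next
    fix x assume "x \<in> box l' u'"
    then have A: "\<And>j. l' $ j < x $ j \<and> x $ j < u' $ j" by (simp add: mem_box_cart)
    have "l $ m < s m * x $ p m \<and> s m * x $ p m < u $ m" for m
      using A[of "p m"] s[of m] unfolding l'_def u'_def by (cases "s m = 1") (auto simp: pinv)
    then show "x \<in> sign_perm s p -` box l u" by (simp add: mem_box_cart sign_perm_def)
  qed
  have "(\<Prod>b\<in>Basis. (u' - l') \<bullet> b) = (\<Prod>j\<in>UNIV. (u - l) $ inv p j)"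
    unfolding prod_Basis_vec by (intro prod.cong refl) (auto simp: inner_axis u'_def l'_def)
  also have "\<dots> = (\<Prod>j\<in>UNIV. (u - l) $ j)"
    using prod.reindex_bij_betw[OF permutes_imp_bij[OF permutes_inv[OF p]], of "\<lambda>j. (u - l) $ j"]
    by simp
  also have "\<dots> = (\<Prod>b\<in>Basis. (u - l) \<bullet> b)"
    unfolding prod_Basis_vec by (simp add: inner_axis)
  finally have vol: "(\<Prod>b\<in>Basis. (u' - l') \<bullet> b) = (\<Prod>b\<in>Basis. (u - l) \<bullet> b)" .
  have "emeasure (distr lborel borel (sign_perm s p)) (box l u) = emeasure lborel (box l' u')"
    using \<open>sign_perm s p -` box l u = box l' u'\<close>
    by (simp add: emeasure_distr sign_perm_borel_measurable)
  also have "\<dots> = (\<Prod>b\<in>Basis. (u' - l') \<bullet> b)"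
    by (rule emeasure_lborel_box) (use lu' in \<open>auto simp: Basis_vec_def inner_axis l'_def u'_def\<close>)
  finally show "emeasure (distr lborel borel (sign_perm s p)) (box l u) = (\<Prod>b\<in>Basis. (u - l) \<bullet> b)"
    by (simp add: vol)
qed

lemma lborel_integral_sign_perm:
  fixes F :: "real^'n::finite \<Rightarrow> real"
  assumes "p permutes UNIV" and "\<And>j. s j = 1 \<or> s j = -1" and "F \<in> borel_measurable borel"
  shows "(LINT x|lborel. F (sign_perm s p x)) = (LINT x|lborel. F x)"
proof -
  have "(LINT x|lborel. F x) = (LINT x|distr lborel borel (sign_perm s p). F x)"
    by (simp add: distr_lborel_sign_perm[OF assms(1,2)])
  also have "\<dots> = (LINT x|lborel. F (sign_perm s p x))"
    by (rule integral_distr) (use assms(3) sign_perm_borel_measurable in auto)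
  finally show ?thesis ..
qed

lemma K1_sign_perm_invariant:
  assumes "K1 K" and "p permutes UNIV" and "\<And>j. \<bar>s j\<bar> = 1"
  shows "K (sign_perm s p x) = K x"
  by (rule K1_radial[OF assms(1)]) (rule norm_sign_perm[OF assms(2,3)])

lemma mi_order_comp_permutes: "p permutes UNIV \<Longrightarrow> mi_order (\<alpha> \<circ> p) = mi_order \<alpha>"
  unfolding mi_order_def using sum.reindex_bij_betw[OF permutes_imp_bij, of p UNIV \<alpha>] by simp

lemma mderiv_comp_permutes:
  assumes K: "K1 K" and "mi_order \<alpha> \<le> 4" and p: "p permutes UNIV"
  shows "mderiv \<alpha> K x = mderiv (\<alpha> \<circ> p) K (sign_perm (\<lambda>_. 1) p x)"
proof -
  obtain xs where xs: "\<alpha> = count_list xs" and len: "length xs = mi_order \<alpha>"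
    by (rule obtain_count_list)
  have "count_list (map (inv p) xs) k = count_list xs (p k)" for k
    using count_list_map_conv[OF permutes_inj[OF permutes_inv[OF p]], of xs "p k"] p
    by (simp add: permutes_inverses(2))
  then have "\<alpha> \<circ> p = count_list (map (inv p) xs)" by (auto simp: xs)
  moreover have "prod_list (map (\<lambda>_. 1::real) xs) = 1" by (induction xs) auto
  moreover have "K (sign_perm (\<lambda>_. 1) p y) = K y" for y
    by (rule K1_sign_perm_invariant[OF K p]) simp
  ultimately show ?thesis
    using pdl_sign_perm[OF K1_cont_partials_upto[OF K] p, of "\<lambda>_. 1" xs x]
      mderiv_count_list[OF K1_cont_partials_upto[OF K]] assms(2)
    by (simp add: xs len)
qed

lemma sq_int_comp_permutes:
  assumes K: "K1 K" and "mi_order \<alpha> \<le> 4" and p: "p permutes UNIV"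
  shows "sq_int (\<alpha> \<circ> p) K = sq_int \<alpha> K"
proof -
  have "cont_supp_unit_ball (mderiv (\<alpha> \<circ> p) K)"
    using mderiv_cont_supp_unit_ball[OF K] mi_order_comp_permutes[OF p] assms(2) by simp
  then have meas: "(\<lambda>x. (mderiv (\<alpha> \<circ> p) K x)\<^sup>2) \<in> borel_measurable borel"
    by (auto simp: cont_supp_unit_ball_def intro!: borel_measurable_continuous_onI continuous_intros)
  have "(LINT x|lborel. (mderiv (\<alpha> \<circ> p) K (sign_perm (\<lambda>_. 1) p x))\<^sup>2) = sq_int (\<alpha> \<circ> p) K"
    unfolding sq_int_def by (rule lborel_integral_sign_perm[OF p _ meas]) simp
  then show ?thesis
    unfolding sq_int_def using mderiv_comp_permutes[OF assms] by simp
qed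

lemma sq_int_Perms:
  assumes "K1 K" and "mi_order \<rho> \<le> 4" and "\<gamma> \<in> Perms \<rho>"
  shows "sq_int \<gamma> K = sq_int \<rho> K"
  using assms(3) sq_int_comp_permutes[OF assms(1,2)] unfolding Perms_def by blast

lemma mderiv_reflect:
  assumes K: "K1 K" and "mi_order \<gamma> \<le> 4"
  shows "mderiv \<gamma> K x = (-1) ^ \<gamma> i * mderiv \<gamma> K (sign_perm (\<lambda>j. if j = i then -1 else 1) id x)"
proof -
  obtain xs where xs: "\<gamma> = count_list xs" and len: "length xs = mi_order \<gamma>"
    by (rule obtain_count_list)
  have "prod_list (map (\<lambda>j. if j = i then -1 else 1::real) xs) = (-1) ^ count_list xs i"
    by (induction xs) auto
  moreover have "K (sign_perm (\<lambda>j. if j = i then -1 else 1) id y) = K y" for y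
    by (rule K1_sign_perm_invariant[OF K permutes_id]) simp
  ultimately show ?thesis
    using pdl_sign_perm[OF K1_cont_partials_upto[OF K] permutes_id,
        of "\<lambda>j. if j = i then -1 else 1" xs x]
      mderiv_count_list[OF K1_cont_partials_upto[OF K]] assms(2)
    by (simp add: xs len)
qed

lemma cross_integral_odd_eq_0:
  assumes K: "K1 K" and "mi_order \<alpha> \<le> 4" and "mi_order \<beta> \<le> 4" and "odd (\<alpha> i + \<beta> i)"
  shows "(LINT x|lborel. mderiv \<alpha> K x * mderiv \<beta> K x) = 0"
proof -
  define R where "R = sign_perm (\<lambda>j. if j = i then -1 else 1) id"
  define F where "F x = mderiv \<alpha> K x * mderiv \<beta> K x" for x
  have meas: "F \<in> borel_measurable borel"
    using mderiv_cont_supp_unit_ball[OF K assms(2)] mderiv_cont_supp_unit_ball[OF K assms(3)]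
    unfolding F_def cont_supp_unit_ball_def
    by (intro borel_measurable_continuous_onI) (auto intro!: continuous_intros)
  have F_odd: "F x = - F (R x)" for x
  proof -
    have "F x = ((-1) ^ \<alpha> i * (-1) ^ \<beta> i) * F (R x)"
      unfolding F_def R_def
      using mderiv_reflect[OF K assms(2), of x i] mderiv_reflect[OF K assms(3), of x i]
      by (simp add: algebra_simps)
    also have "(-1::real) ^ \<alpha> i * (-1) ^ \<beta> i = -1"
      using assms(4) by (simp add: power_add[symmetric])
    finally show ?thesis by simp
  qed
  have "(LINT x|lborel. F x) = (LINT x|lborel. - F (R x))"
    by (rule Bochner_Integration.integral_cong[OF refl F_odd])
  also have "\<dots> = - (LINT x|lborel. F x)"
    unfolding R_def by (simp add: lborel_integral_sign_perm[OF permutes_id _ meas])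
  finally have "(LINT x|lborel. F x) = - (LINT x|lborel. F x)" .
  then show ?thesis unfolding F_def by simp
qed

section \<open>Reduction of mixed integrals to squared derivatives\<close>

lemma mi_order_eq_obtain_excess_deficit:
  fixes \<alpha> \<gamma> :: "'a::finite \<Rightarrow> nat"
  assumes "mi_order \<alpha> = mi_order \<gamma>" and "\<alpha> \<noteq> \<gamma>"
  obtains i j where "\<gamma> i < \<alpha> i" and "\<alpha> j < \<gamma> j"
proof -
  have "\<exists>i. \<gamma> i < \<alpha> i"
    using assms sum_mono_inv[of \<alpha> UNIV \<gamma>] by (force simp: mi_order_def not_less)
  moreover have "\<exists>j. \<alpha> j < \<gamma> j"
    using assms sum_mono_inv[of \<gamma> UNIV \<alpha>] by (force simp: mi_order_def not_less)
  ultimately show ?thesis using that by blast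
qed

lemma cross_integral_exchange:
  assumes K: "K1 K" and "mi_order \<alpha> \<le> 2" and "mi_order \<beta> \<le> 2"
  shows "(LINT x|lborel. mderiv (\<alpha>(i := Suc (\<alpha> i))) K x * mderiv (\<beta>(j := Suc (\<beta> j))) K x)
       = (LINT x|lborel. mderiv (\<alpha>(j := Suc (\<alpha> j))) K x * mderiv (\<beta>(i := Suc (\<beta> i))) K x)"
proof -
  define \<beta>i where "\<beta>i = \<beta>(i := Suc (\<beta> i))"
  define \<beta>j where "\<beta>j = \<beta>(j := Suc (\<beta> j))"
  have orders: "mi_order \<alpha> \<le> 3" "mi_order \<beta>i \<le> 3" "mi_order \<beta>j \<le> 3"
    using assms by (simp_all add: \<beta>i_def \<beta>j_def mi_order_update_Suc del: fun_upd_apply)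
  have "\<beta>j(i := Suc (\<beta>j i)) = \<beta>i(j := Suc (\<beta>i j))"
    by (auto simp: \<beta>i_def \<beta>j_def fun_eq_iff)
  then show ?thesis
    using mderiv_integration_by_parts[OF K orders(1,3), of i]
      mderiv_integration_by_parts[OF K orders(1,2), of j]
    by (simp add: \<beta>i_def \<beta>j_def)
qed

text \<open>Subtraction in the induction measure is truncated: \<open>\<Sum>\<^sub>i (\<alpha>\<^sub>i - \<gamma>\<^sub>i)\<close> counts the
  derivatives that \<open>\<alpha>\<close> has in excess of \<open>\<gamma>\<close>.\<close>

lemma cross_integral_eq_sq_int:
  assumes K: "K1 K"
  shows "mi_order \<alpha> = 3 \<Longrightarrow> mi_order \<beta> = 3 \<Longrightarrow> (\<And>i. \<alpha> i + \<beta> i = 2 * \<gamma> i) \<Longrightarrow>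
    (LINT x|lborel. mderiv \<alpha> K x * mderiv \<beta> K x) = sq_int \<gamma> K"
proof (induction "\<Sum>i\<in>UNIV. \<alpha> i - \<gamma> i" arbitrary: \<alpha> \<beta> rule: less_induct)
  case less
  have "2 * mi_order \<gamma> = mi_order \<alpha> + mi_order \<beta>"
    unfolding mi_order_def by (simp add: sum.distrib[symmetric] sum_distrib_left less.prems(3))
  then have order_\<gamma>: "mi_order \<gamma> = mi_order \<alpha>" using less.prems by simp
  show ?case
  proof (cases "\<alpha> = \<gamma>")
    case True
    then have "\<beta> = \<gamma>" using less.prems(3) by (auto simp: fun_eq_iff)
    with True show ?thesis by (simp add: sq_int_def power2_eq_square)
  next
    case False
    then obtain i j where i: "\<gamma> i < \<alpha> i" and j: "\<alpha> j < \<gamma> j"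
      using mi_order_eq_obtain_excess_deficit[OF order_\<gamma>[symmetric]] by blast
    have "i \<noteq> j" using i j by auto
    have \<beta>j: "\<gamma> j < \<beta> j" using less.prems(3)[of j] j by linarith
    define \<alpha>0 where "\<alpha>0 = \<alpha>(i := \<alpha> i - 1)"
    define \<beta>0 where "\<beta>0 = \<beta>(j := \<beta> j - 1)"
    have \<alpha>: "\<alpha> = \<alpha>0(i := Suc (\<alpha>0 i))" and \<beta>: "\<beta> = \<beta>0(j := Suc (\<beta>0 j))"
      using i \<beta>j by (auto simp: \<alpha>0_def \<beta>0_def fun_eq_iff)
    have orders0: "mi_order \<alpha>0 = 2" "mi_order \<beta>0 = 2"
      using less.prems(1,2) mi_order_update_Suc[of \<alpha>0 i] mi_order_update_Suc[of \<beta>0 j] \<alpha> \<beta> by simp_all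
    then have orders: "mi_order (\<alpha>0(j := Suc (\<alpha>0 j))) = 3" "mi_order (\<beta>0(i := Suc (\<beta>0 i))) = 3"
      by (simp_all add: mi_order_update_Suc del: fun_upd_apply)
    have sums: "(\<alpha>0(j := Suc (\<alpha>0 j))) k + (\<beta>0(i := Suc (\<beta>0 i))) k = 2 * \<gamma> k" for k
      using less.prems(3)[of k] \<open>i \<noteq> j\<close> i \<beta>j by (auto simp: \<alpha>0_def \<beta>0_def)
    have decrease: "(\<Sum>k\<in>UNIV. (\<alpha>0(j := Suc (\<alpha>0 j))) k - \<gamma> k) < (\<Sum>k\<in>UNIV. \<alpha> k - \<gamma> k)"
    proof (rule sum_strict_mono_ex1)
      show "\<forall>k\<in>UNIV. (\<alpha>0(j := Suc (\<alpha>0 j))) k - \<gamma> k \<le> \<alpha> k - \<gamma> k"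
        using \<open>i \<noteq> j\<close> j by (auto simp: \<alpha>0_def)
      show "\<exists>k\<in>UNIV. (\<alpha>0(j := Suc (\<alpha>0 j))) k - \<gamma> k < \<alpha> k - \<gamma> k"
        using \<open>i \<noteq> j\<close> i by (intro bexI[of _ i]) (auto simp: \<alpha>0_def)
    qed simp
    have "(LINT x|lborel. mderiv \<alpha> K x * mderiv \<beta> K x)
        = (LINT x|lborel. mderiv (\<alpha>0(j := Suc (\<alpha>0 j))) K x * mderiv (\<beta>0(i := Suc (\<beta>0 i))) K x)"
      using cross_integral_exchange[OF K, of \<alpha>0 \<beta>0 i j] orders0 by (simp flip: \<alpha> \<beta>)
    also have "\<dots> = sq_int \<gamma> K"
      by (rule less.hyps[OF decrease orders sums])
    finally show ?thesis .
  qed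
qed

section \<open>Multi-indices of order three\<close>

lemma coord_inj:
  assumes "k < CARD('n::{finite,linorder})" and "l < CARD('n)" and "(coord k :: 'n) = coord l"
  shows "k = l"
  using assms nth_eq_iff_index_eq[of "sorted_list_of_set (UNIV :: 'n set)"]
  unfolding coord_def by simp

lemma ex_permutes_map_eq:
  fixes xs ys :: "'a::finite list"
  shows "distinct xs \<Longrightarrow> distinct ys \<Longrightarrow> length xs = length ys \<Longrightarrow>
    \<exists>p. p permutes UNIV \<and> map p xs = ys"
proof (induction xs arbitrary: ys)
  case Nil
  then show ?case using permutes_id by fastforce
next
  case (Cons x xs)
  then obtain y ys' where ys: "ys = y # ys'" by (cases ys) auto
  with Cons obtain p where p: "p permutes UNIV" "map p xs = ys'" by auto
  define q where "q = Transposition.transpose (p x) y \<circ> p"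
  have "p x \<notin> set ys'"
  proof
    assume "p x \<in> set ys'"
    then obtain z where "z \<in> set xs" "p z = p x" using p(2) by auto
    then show False using Cons.prems(1) permutes_inj[OF p(1)] by (auto dest: injD)
  qed
  moreover have "y \<notin> set ys'" using Cons.prems(2) ys by simp
  ultimately have "map (Transposition.transpose (p x) y) ys' = ys'"
    by (intro map_idI) (metis transpose_apply_other)
  then have "map q (x # xs) = ys" unfolding q_def using p(2) ys by (simp flip: map_map)
  moreover have "q permutes UNIV" unfolding q_def
    by (rule permutes_compose[OF p(1)]) (simp add: permutes_swap_id)
  ultimately show ?case by blast
qed

lemma count_list_map_in_Perms:
  assumes "p permutes UNIV"
  shows "count_list (map p xs) \<in> Perms (count_list xs)"
proof -
  have "count_list (map p xs) k = count_list xs (inv p k)" for k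
    using count_list_map_conv[OF permutes_inj[OF assms], of xs "inv p k"] assms
    by (simp add: permutes_inverses(1))
  then have "count_list (map p xs) = count_list xs \<circ> inv p" by auto
  then show ?thesis
    unfolding Perms_def using permutes_inv[OF assms] by blast
qed

lemma rho_eq_count_list:
  assumes "CARD('n::{finite,linorder}) \<ge> 2"
  shows "(rho 1 :: 'n \<Rightarrow> nat) = count_list [coord 0, coord 0, coord 0]"
    and "(rho 2 :: 'n \<Rightarrow> nat) = count_list [coord 0, coord 0, coord 1]"
    and "CARD('n) \<ge> 3 \<Longrightarrow> (rho 3 :: 'n \<Rightarrow> nat) = count_list [coord 0, coord 1, coord 2]"
proof -
  have 01: "(coord 0 :: 'n) \<noteq> coord 1" using coord_inj[of 0 1] assms by force
  show "(rho 1 :: 'n \<Rightarrow> nat) = count_list [coord 0, coord 0, coord 0]"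
    by (auto simp: rho_def fun_eq_iff)
  show "(rho 2 :: 'n \<Rightarrow> nat) = count_list [coord 0, coord 0, coord 1]"
    using 01 by (auto simp: rho_def fun_eq_iff)
  assume "CARD('n) \<ge> 3"
  then have "(coord 0 :: 'n) \<noteq> coord 2" "(coord 1 :: 'n) \<noteq> coord 2"
    using coord_inj[of 0 2] coord_inj[of 1 2] by force+
  then show "(rho 3 :: 'n \<Rightarrow> nat) = count_list [coord 0, coord 1, coord 2]"
    using 01 by (auto simp: rho_def fun_eq_iff)
qed

lemma mi_order_rho:
  assumes "CARD('n::{finite,linorder}) \<ge> 2" and "q \<in> {1,2} \<union> (if CARD('n) \<ge> 3 then {3} else {})"
  shows "mi_order (rho q :: 'n \<Rightarrow> nat) = 3"
  using assms rho_eq_count_list[OF assms(1)]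
  by (auto simp: mi_order_count_list split: if_splits)

lemma count_list_in_Perms_rho_2:
  fixes u v :: "'n::{finite,linorder}"
  assumes "CARD('n) \<ge> 2" and "u \<noteq> v"
  shows "count_list [u, u, v] \<in> Perms (rho 2)"
proof -
  have "(coord 0 :: 'n) \<noteq> coord 1" using coord_inj[of 0 1] assms(1) by force
  then obtain p where "p permutes UNIV" "map p [coord 0, coord 1] = [u, v]"
    using ex_permutes_map_eq[of "[coord 0, coord 1]" "[u, v]"] assms(2) by auto
  then show ?thesis
    using count_list_map_in_Perms[of p "[coord 0, coord 0, coord 1]"] rho_eq_count_list(2)[OF assms(1)]
    by simp
qed

lemma mi_order_3_in_Perms_rho:
  fixes \<gamma> :: "'n::{finite,linorder} \<Rightarrow> nat"
  assumes d: "CARD('n) \<ge> 2" and "mi_order \<gamma> = 3"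
  shows "\<exists>q\<in>{1,2} \<union> (if CARD('n) \<ge> 3 then {3} else {}). \<gamma> \<in> Perms (rho q)"
proof -
  obtain xs where "\<gamma> = count_list xs" and "length xs = mi_order \<gamma>"
    by (rule obtain_count_list)
  then obtain a b c where \<gamma>: "\<gamma> = count_list [a, b, c]"
    using assms(2) by (auto simp: numeral_3_eq_3 length_Suc_conv)
  consider "a = b" "b = c" | "a = b" "b \<noteq> c" | "a \<noteq> b" "b = c" | "a \<noteq> b" "a = c"
    | "distinct [a, b, c]"
    by auto
  then show ?thesis
  proof cases
    case 1
    obtain p where "p permutes UNIV" "map p [coord 0] = [a]"
      using ex_permutes_map_eq[of "[coord 0]" "[a]"] by auto
    then have "\<gamma> \<in> Perms (rho 1)"
      using count_list_map_in_Perms[of p "[coord 0, coord 0, coord 0]"] rho_eq_count_list(1)[OF d] 1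
      by (simp add: \<gamma>)
    then show ?thesis by auto
  next
    case 2
    then show ?thesis using count_list_in_Perms_rho_2[OF d, of b c] by (auto simp: \<gamma>)
  next
    case 3
    have "\<gamma> = count_list [b, b, a]" using 3 by (auto simp: \<gamma> fun_eq_iff)
    then show ?thesis using count_list_in_Perms_rho_2[OF d, of b a] 3 by auto
  next
    case 4
    have "\<gamma> = count_list [a, a, b]" using 4 by (auto simp: \<gamma> fun_eq_iff)
    then show ?thesis using count_list_in_Perms_rho_2[OF d, of a b] 4 by auto
  next
    case 5
    then have "card (set [a, b, c]) = 3" by (simp add: distinct_card)
    moreover have "card (set [a, b, c]) \<le> CARD('n)" by (rule card_mono) auto
    ultimately have d3: "CARD('n) \<ge> 3" by simp
    then have "distinct [coord 0, coord 1, coord 2 :: 'n]"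
      using coord_inj[where 'n='n, of 0 1] coord_inj[where 'n='n, of 0 2]
        coord_inj[where 'n='n, of 1 2] by force
    then obtain p where "p permutes UNIV" "map p [coord 0, coord 1, coord 2] = [a, b, c]"
      using ex_permutes_map_eq[of "[coord 0, coord 1, coord 2]" "[a, b, c]"] 5 by auto
    then have "\<gamma> \<in> Perms (rho 3)"
      using count_list_map_in_Perms[of p "[coord 0, coord 1, coord 2]"] rho_eq_count_list(3)[OF d d3]
      by (simp add: \<gamma>)
    then show ?thesis using d3 by auto
  qed
qed

lemma cross_integral_eq_sq_int_rho:
  fixes K :: "real^'n::{finite,linorder} \<Rightarrow> real"
  assumes d: "CARD('n) \<ge> 2" and K: "K1 K" and "mi_order \<alpha> = 3" and "mi_order \<beta> = 3"
    and q: "q \<in> {1,2} \<union> (if CARD('n) \<ge> 3 then {3} else {})"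
    and "(\<lambda>i. \<alpha> i + \<beta> i) \<in> {(\<lambda>i. 2 * \<gamma> i) | \<gamma>. \<gamma> \<in> Perms (rho q)}"
  shows "(LINT u|lborel. mderiv \<alpha> K u * mderiv \<beta> K u) = sq_int (rho q) K"
proof -
  obtain \<gamma> where \<gamma>: "\<gamma> \<in> Perms (rho q)" and sum: "(\<lambda>i. \<alpha> i + \<beta> i) = (\<lambda>i. 2 * \<gamma> i)"
    using assms(6) by blast
  have "(LINT u|lborel. mderiv \<alpha> K u * mderiv \<beta> K u) = sq_int \<gamma> K"
    by (rule cross_integral_eq_sq_int[OF K assms(3,4)]) (use fun_cong[OF sum] in simp)
  also have "\<dots> = sq_int (rho q) K"
    by (rule sq_int_Perms[OF K _ \<gamma>]) (simp add: mi_order_rho[OF d q])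
  finally show ?thesis .
qed

lemma cross_integral_eq_0:
  fixes K :: "real^'n::{finite,linorder} \<Rightarrow> real"
  assumes d: "CARD('n) \<ge> 2" and K: "K1 K" and "mi_order \<alpha> = 3" and "mi_order \<beta> = 3"
    and none: "\<forall>q\<in>{1,2} \<union> (if CARD('n) \<ge> 3 then {3} else {}).
      (\<lambda>i. \<alpha> i + \<beta> i) \<notin> {(\<lambda>i. 2 * \<gamma> i) | \<gamma>. \<gamma> \<in> Perms (rho q)}"
  shows "(LINT u|lborel. mderiv \<alpha> K u * mderiv \<beta> K u) = 0"
proof (cases "\<exists>i. odd (\<alpha> i + \<beta> i)")
  case True
  then obtain i where "odd (\<alpha> i + \<beta> i)" by blast
  then show ?thesis using cross_integral_odd_eq_0[OF K] assms(3,4) by simp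
next
  case False
  define \<gamma> where "\<gamma> i = (\<alpha> i + \<beta> i) div 2" for i
  have sum: "(\<lambda>i. \<alpha> i + \<beta> i) = (\<lambda>i. 2 * \<gamma> i)" using False by (auto simp: \<gamma>_def)
  then have "2 * mi_order \<gamma> = mi_order \<alpha> + mi_order \<beta>"
    unfolding mi_order_def by (simp add: sum.distrib[symmetric] sum_distrib_left fun_eq_iff)
  then have "mi_order \<gamma> = 3" using assms(3,4) by simp
  then obtain q where q: "q \<in> {1,2} \<union> (if CARD('n) \<ge> 3 then {3} else {})" "\<gamma> \<in> Perms (rho q)"
    using mi_order_3_in_Perms_rho[OF d] by blast
  then have "(\<lambda>i. \<alpha> i + \<beta> i) \<in> {(\<lambda>i. 2 * \<gamma> i) | \<gamma>. \<gamma> \<in> Perms (rho q)}"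
    using sum by blast
  with none q(1) show ?thesis by blast
qed

lemma a_K_ge_1:
  fixes K :: "real^'n::{finite,linorder} \<Rightarrow> real"
  assumes d: "CARD('n) \<ge> 2" and K: "K1 K"
  shows "a_K K \<ge> 1"
proof -
  define c0 c1 where "c0 = (coord 0 :: 'n)" and "c1 = (coord 1 :: 'n)"
  have "c0 \<noteq> c1" using coord_inj[of 0 1] d unfolding c0_def c1_def by force
  define \<beta> where "\<beta> = count_list [c1, c1, c0]"
  have rho: "rho 1 = count_list [c0, c0, c0]" "rho 2 = count_list [c0, c0, c1]"
    using rho_eq_count_list[OF d] unfolding c0_def c1_def by auto
  have orders: "mi_order (rho 1 :: 'n \<Rightarrow> nat) = 3" "mi_order (rho 2 :: 'n \<Rightarrow> nat) = 3" "mi_order \<beta> = 3"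
    unfolding rho \<beta>_def mi_order_count_list by simp_all
  have "(LINT x|lborel. mderiv (rho 1) K x * mderiv \<beta> K x) = sq_int (rho 2) K"
    by (rule cross_integral_eq_sq_int[OF K orders(1,3)]) (use \<open>c0 \<noteq> c1\<close> in \<open>unfold rho \<beta>_def, auto\<close>)
  moreover have "sq_int \<beta> K = sq_int (rho 2) K"
    using sq_int_Perms[OF K _ count_list_in_Perms_rho_2[OF d]] orders \<open>c0 \<noteq> c1\<close>
    unfolding \<beta>_def by simp
  ultimately have "sq_int (rho 2) K \<le> sq_int (rho 1) K"
    using cross_integral_le_mean_sq_int[OF K, of "rho 1" \<beta>] orders by simp
  then show ?thesis unfolding a_K_def using sq_int_pos[OF K] orders(2) by simp
qed

lemma b_K_le_1:
  fixes K :: "real^'n::{finite,linorder} \<Rightarrow> real"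
  assumes d: "CARD('n) \<ge> 3" and K: "K1 K"
  shows "b_K K \<le> 1"
proof -
  have d2: "CARD('n) \<ge> 2" using d by simp
  define c0 c1 c2 where "c0 = (coord 0 :: 'n)" and "c1 = (coord 1 :: 'n)" and "c2 = (coord 2 :: 'n)"
  have "distinct [c0, c1, c2]"
    using coord_inj[where 'n='n, of 0 1] coord_inj[where 'n='n, of 0 2]
      coord_inj[where 'n='n, of 1 2] d unfolding c0_def c1_def c2_def by force
  define \<alpha> where "\<alpha> = count_list [c0, c0, c2]"
  define \<beta> where "\<beta> = count_list [c1, c1, c2]"
  have rho: "rho 2 = count_list [c0, c0, c1]" "rho 3 = count_list [c0, c1, c2]"
    using rho_eq_count_list[OF d2] d unfolding c0_def c1_def c2_def by auto
  have orders: "mi_order (rho 2 :: 'n \<Rightarrow> nat) = 3" "mi_order (rho 3 :: 'n \<Rightarrow> nat) = 3"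
    "mi_order \<alpha> = 3" "mi_order \<beta> = 3"
    unfolding rho \<alpha>_def \<beta>_def mi_order_count_list by simp_all
  have "(LINT x|lborel. mderiv \<alpha> K x * mderiv \<beta> K x) = sq_int (rho 3) K"
    by (rule cross_integral_eq_sq_int[OF K orders(3,4)])
      (use \<open>distinct [c0, c1, c2]\<close> in \<open>unfold rho \<alpha>_def \<beta>_def, auto\<close>)
  moreover have "sq_int \<alpha> K = sq_int (rho 2) K" "sq_int \<beta> K = sq_int (rho 2) K"
    using sq_int_Perms[OF K _ count_list_in_Perms_rho_2[OF d2]] orders \<open>distinct [c0, c1, c2]\<close>
    unfolding \<alpha>_def \<beta>_def by simp_all
  ultimately have "sq_int (rho 3) K \<le> sq_int (rho 2) K"
    using cross_integral_le_mean_sq_int[OF K, of \<alpha> \<beta>] orders by simp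
  then show ?thesis unfolding b_K_def using sq_int_pos[OF K] orders(1) by simp
qed

theorem lemma5:
  fixes K :: "real^'n::{finite,linorder} \<Rightarrow> real"
  assumes d2: "CARD('n) \<ge> 2"
    and k1: "K1 K"
  shows "(\<forall>\<alpha> \<beta> :: 'n \<Rightarrow> nat. mi_order \<alpha> = 3 \<longrightarrow> mi_order \<beta> = 3 \<longrightarrow>
            (\<forall>q\<in>{1,2} \<union> (if CARD('n) \<ge> 3 then {3} else {}).
                (\<lambda>i. \<alpha> i + \<beta> i) \<in> {(\<lambda>i. 2 * \<gamma> i) | \<gamma>. \<gamma> \<in> Perms (rho q)} \<longrightarrow>
                (LINT u|lborel. mderiv \<alpha> K u * mderiv \<beta> K u) = sq_int (rho q) K) \<and>
            ((\<forall>q\<in>{1,2} \<union> (if CARD('n) \<ge> 3 then {3} else {}).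
                (\<lambda>i. \<alpha> i + \<beta> i) \<notin> {(\<lambda>i. 2 * \<gamma> i) | \<gamma>. \<gamma> \<in> Perms (rho q)}) \<longrightarrow>
                (LINT u|lborel. mderiv \<alpha> K u * mderiv \<beta> K u) = 0))
         \<and> a_K K \<ge> 1 \<and> (CARD('n) \<ge> 3 \<longrightarrow> b_K K \<le> 1)"
  using cross_integral_eq_sq_int_rho[OF d2 k1] cross_integral_eq_0[OF d2 k1]
    a_K_ge_1[OF d2 k1] b_K_le_1[OF _ k1]
  by blast

end
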